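(* Let $G$ be a completable graph and let $A(G),B(G)$ be $G$-partial matrices with $0<B(G)<A(G)$. Then $$\mathfrak{p}^+[A(G)-B(G)]=\big(\mathfrak{p}^+[A(G)]-\mathfrak{p}^+[B(G)]\big)\cap\mathbb{P},$$ where $\mathfrak{p}^+[A(G)]-\mathfrak{p}^+[B(G)]=\{M-N:M\in\mathfrak{p}^+[A(G)],N\in\mathfrak{p}^+[B(G)]\}$.
   Context: A graph $G=(V,E)$ is a finite undirected graph on $V=\{1,\dots,n\}$ containing all loops. A $G$-partial matrix has entries specified exactly for $\{i,j\}\in E$; a completion is an $n\times n$ matrix agreeing with it on $E$. Sums and differences of $G$-partial matrices are taken entrywise on $E$. A $G$-partial matrix $[a_{ij}]_G$ is partial positive definite if $a_{ji}=\overline{a_{ij}}$ on $E$ and every principal submatrix indexed by a clique of $G$ is positive definite. For $G$-partial Hermitian matrices, $C(G)>D(G)$ means $C(G)-D(G)$ is partial positive definite (so $0<B(G)$ means $B(G)$ is partial positive definite). $G$ is completable if every $G$-partial positive semidefinite matrix has a positive semidefinite completion (equivalently $G$ chordal). $\mathfrak{p}^+[\cdot]$ denotes the set of positive definite completions, and $\mathbb{P}$ the set of $n\times n$ positive definite matrices. *)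

theory Defs
  imports "HOL-Analysis.Analysis"
begin

text \<open>Vertices are the elements of a finite type 'n (playing the role of {1..n});
  matrices are complex n x n matrices of type complex^'n^'n.
  A G-partial matrix is represented by any full matrix; only its entries on E matter
  (all notions below depend only on the entries on E).\<close>

definition is_graph :: "('n::finite \<times> 'n) set \<Rightarrow> bool" where
  "is_graph E \<longleftrightarrow> sym E \<and> (\<forall>i. (i, i) \<in> E)"

definition is_clique :: "('n::finite \<times> 'n) set \<Rightarrow> 'n set \<Rightarrow> bool" where
  "is_clique E K \<longleftrightarrow> (\<forall>i\<in>K. \<forall>j\<in>K. (i, j) \<in> E)"

definition qform :: "complex^'n^'n \<Rightarrow> complex^'n \<Rightarrow> complex" where
  "qform A x = (\<Sum>i\<in>UNIV. \<Sum>j\<in>UNIV. cnj (x$i) * A$i$j * x$j)"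

definition pd_on :: "'n::finite set \<Rightarrow> complex^'n^'n \<Rightarrow> bool" where
  "pd_on K A \<longleftrightarrow> (\<forall>i\<in>K. \<forall>j\<in>K. A$j$i = cnj (A$i$j)) \<and>
     (\<forall>x. x \<noteq> 0 \<and> (\<forall>i. i \<notin> K \<longrightarrow> x$i = 0) \<longrightarrow>
        Im (qform A x) = 0 \<and> Re (qform A x) > 0)"

definition psd_on :: "'n::finite set \<Rightarrow> complex^'n^'n \<Rightarrow> bool" where
  "psd_on K A \<longleftrightarrow> (\<forall>i\<in>K. \<forall>j\<in>K. A$j$i = cnj (A$i$j)) \<and>
     (\<forall>x. (\<forall>i. i \<notin> K \<longrightarrow> x$i = 0) \<longrightarrow>
        Im (qform A x) = 0 \<and> Re (qform A x) \<ge> 0)"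

definition pos_def :: "complex^'n^'n \<Rightarrow> bool" where
  "pos_def M \<longleftrightarrow> pd_on (UNIV::'n::finite set) M"

definition pos_semidef :: "complex^'n^'n \<Rightarrow> bool" where
  "pos_semidef M \<longleftrightarrow> psd_on (UNIV::'n::finite set) M"

definition partial_pd :: "('n::finite \<times> 'n) set \<Rightarrow> complex^'n^'n \<Rightarrow> bool" where
  "partial_pd E A \<longleftrightarrow> (\<forall>(i, j)\<in>E. A$j$i = cnj (A$i$j)) \<and>
     (\<forall>K. is_clique E K \<longrightarrow> pd_on K A)"

definition partial_psd :: "('n::finite \<times> 'n) set \<Rightarrow> complex^'n^'n \<Rightarrow> bool" where
  "partial_psd E A \<longleftrightarrow> (\<forall>(i, j)\<in>E. A$j$i = cnj (A$i$j)) \<and>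
     (\<forall>K. is_clique E K \<longrightarrow> psd_on K A)"

definition is_completion :: "('n::finite \<times> 'n) set \<Rightarrow> complex^'n^'n \<Rightarrow> complex^'n^'n \<Rightarrow> bool" where
  "is_completion E A M \<longleftrightarrow> (\<forall>(i, j)\<in>E. M$i$j = A$i$j)"

definition completable :: "('n::finite \<times> 'n) set \<Rightarrow> bool" where
  "completable E \<longleftrightarrow> (\<forall>A. partial_psd E A \<longrightarrow> (\<exists>M. is_completion E A M \<and> pos_semidef M))"

definition pd_completions :: "('n::finite \<times> 'n) set \<Rightarrow> complex^'n^'n \<Rightarrow> (complex^'n^'n) set" where
  "pd_completions E A = {M. is_completion E A M \<and> pos_def M}"

end

theory Submission
  imports Defs
begin

text \<open>The inclusion from left to right is the only substantial one: it needs a single positive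
  definite completion N of B, since then every positive definite completion X of A - B gives the
  positive definite completion X + N of A. Such an N exists because B is partial positive definite
  on a completable graph: by compactness of the unit sphere and finiteness of the set of cliques,
  B - \<epsilon>I is still partial positive semidefinite for some \<epsilon> > 0; completing it to a positive
  semidefinite matrix and adding \<epsilon>I back yields N.\<close>

lemma qform_add: "qform (A + B) x = qform A x + qform B x"
  by (simp add: qform_def algebra_simps sum.distrib)

lemma qform_diff: "qform (A - B) x = qform A x - qform B x"
  by (simp add: qform_def algebra_simps sum_subtractf)

lemma qform_zero_right [simp]: "qform A 0 = 0"
  by (simp add: qform_def)

lemma qform_scaleR: "qform A (r *\<^sub>R x) = of_real (r\<^sup>2) * qform A x"
  unfolding qform_def vector_scaleR_component
  by (simp add: sum_distrib_left algebra_simps power2_eq_square scaleR_conv_of_real)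

lemma qform_mat: "qform (mat c) (x::complex^'n::finite) = c * of_real ((norm x)\<^sup>2)"
proof -
  have "qform (mat c) x = c * (\<Sum>i\<in>UNIV. cnj (x$i) * x$i)"
    unfolding qform_def mat_def
    by (simp add: if_distrib if_distribR sum_distrib_left algebra_simps cong: if_cong)
  also have "(\<Sum>i\<in>UNIV. cnj (x$i) * x$i) = of_real ((norm x)\<^sup>2)"
    by (simp add: norm_vec_def L2_set_def sum_nonneg complex_norm_square mult.commute flip: of_real_power)
  finally show ?thesis .
qed

lemma continuous_on_Re_qform: "continuous_on S (\<lambda>x. Re (qform A x))"
  unfolding qform_def by (intro continuous_intros)

lemma pd_on_coercive:
  fixes B :: "complex^'n::finite^'n"
  assumes "pd_on K B"
  obtains e where "e > 0"
    and "\<And>x. (\<forall>i. i \<notin> K \<longrightarrow> x$i = 0) \<Longrightarrow> e * (norm x)\<^sup>2 \<le> Re (qform B x)"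
proof -
  define S where "S = {x::complex^'n. (\<forall>i. i \<notin> K \<longrightarrow> x$i = 0) \<and> norm x = 1}"
  have normalize_in_S: "x /\<^sub>R norm x \<in> S" if "\<forall>i. i \<notin> K \<longrightarrow> x$i = 0" "x \<noteq> 0" for x
    using that by (auto simp: S_def)
  have qform_normalize: "Re (qform B x) = (norm x)\<^sup>2 * Re (qform B (x /\<^sub>R norm x))"
    if "x \<noteq> 0" for x
    using qform_scaleR[of B "norm x" "x /\<^sub>R norm x"] that by simp
  show thesis
  proof (cases "S = {}")
    case True
    show thesis
    proof (rule that[of 1])
      fix x :: "complex^'n" assume "\<forall>i. i \<notin> K \<longrightarrow> x$i = 0"
      then have "x = 0" using normalize_in_S True by blast
      then show "1 * (norm x)\<^sup>2 \<le> Re (qform B x)" by simp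
    qed simp
  next
    case False
    have "compact S"
      unfolding S_def compact_eq_bounded_closed bounded_iff
      by (intro conjI closed_Collect_conj closed_Collect_all closed_Collect_imp closed_Collect_eq
          continuous_intros) auto
    then obtain x0 where x0: "x0 \<in> S" "\<And>y. y \<in> S \<Longrightarrow> Re (qform B x0) \<le> Re (qform B y)"
      using continuous_attains_inf[OF _ False continuous_on_Re_qform] by blast
    have "x0 \<noteq> 0" using x0(1) by (auto simp: S_def)
    then have "Re (qform B x0) > 0"
      using x0(1) assms unfolding S_def pd_on_def by blast
    moreover have "Re (qform B x0) * (norm x)\<^sup>2 \<le> Re (qform B x)"
      if "\<forall>i. i \<notin> K \<longrightarrow> x$i = 0" for x
    proof (cases "x = 0")
      case False
      then show ?thesis
        using qform_normalize[OF False] x0(2)[OF normalize_in_S[OF that False]]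
        by (simp add: mult.commute mult_left_mono)
    qed simp
    ultimately show thesis by (rule that)
  qed
qed

lemma partial_pd_coercive:
  fixes B :: "complex^'n::finite^'n"
  assumes "partial_pd E B"
  obtains \<epsilon> where "\<epsilon> > 0"
    and "\<And>K x. is_clique E K \<Longrightarrow> (\<forall>i. i \<notin> K \<longrightarrow> x$i = 0) \<Longrightarrow>
           \<epsilon> * (norm x)\<^sup>2 \<le> Re (qform B x)"
proof -
  obtain e where e: "\<And>K. is_clique E K \<Longrightarrow> e K > 0"
    "\<And>K x. is_clique E K \<Longrightarrow> (\<forall>i. i \<notin> K \<longrightarrow> x$i = 0) \<Longrightarrow> e K * (norm x)\<^sup>2 \<le> Re (qform B x)"
    using pd_on_coercive assms unfolding partial_pd_def by metis
  define cliques where "cliques = {K. is_clique E K}"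
  have "{} \<in> cliques" by (simp add: cliques_def is_clique_def)
  then have "Min (e ` cliques) > 0"
    using e(1) by (subst Min_gr_iff) (auto simp: cliques_def)
  moreover have "Min (e ` cliques) * (norm x)\<^sup>2 \<le> Re (qform B x)"
    if "is_clique E K" "\<forall>i. i \<notin> K \<longrightarrow> x$i = 0" for K x
  proof -
    have "Min (e ` cliques) \<le> e K" using that(1) by (simp add: cliques_def)
    then show ?thesis using e(2)[OF that] by (meson mult_right_mono order_trans zero_le_power2)
  qed
  ultimately show thesis by (rule that)
qed

lemma partial_psd_diff_mat:
  fixes B :: "complex^'n::finite^'n"
  assumes B: "partial_pd E B" and \<epsilon>: "\<And>K x. is_clique E K \<Longrightarrow> (\<forall>i. i \<notin> K \<longrightarrow> x$i = 0) \<Longrightarrow>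
           \<epsilon> * (norm x)\<^sup>2 \<le> Re (qform B x)"
  shows "partial_psd E (B - mat (of_real \<epsilon>))"
proof -
  let ?C = "B - mat (of_real \<epsilon>)"
  have herm: "?C$j$i = cnj (?C$i$j)" if "(i, j) \<in> E" for i j
    using that B unfolding partial_pd_def mat_def by auto
  have "psd_on K ?C" if K: "is_clique E K" for K
    unfolding psd_on_def
  proof (intro conjI ballI allI impI)
    show "?C$j$i = cnj (?C$i$j)" if "i \<in> K" "j \<in> K" for i j
      using K that unfolding is_clique_def by (intro herm) blast
    fix x :: "complex^'n" assume x: "\<forall>i. i \<notin> K \<longrightarrow> x$i = 0"
    have q: "qform ?C x = qform B x - of_real \<epsilon> * of_real ((norm x)\<^sup>2)"
      unfolding qform_diff qform_mat ..
    have "Im (qform B x) = 0"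
      using B K x unfolding partial_pd_def pd_on_def by (cases "x = 0") auto
    then show "Im (qform ?C x) = 0" using q by simp
    show "0 \<le> Re (qform ?C x)" using q \<epsilon>[OF K x] by simp
  qed
  with herm show ?thesis unfolding partial_psd_def by auto
qed

lemma pos_def_add_mat:
  fixes M :: "complex^'n::finite^'n"
  assumes M: "pos_semidef M" and "\<epsilon> > 0"
  shows "pos_def (M + mat (of_real \<epsilon>))"
  unfolding pos_def_def pd_on_def
proof (intro conjI ballI allI impI)
  fix i j :: 'n
  have "M$j$i = cnj (M$i$j)" using M unfolding pos_semidef_def psd_on_def by blast
  then show "(M + mat (of_real \<epsilon>))$j$i = cnj ((M + mat (of_real \<epsilon>))$i$j)"
    by (simp add: mat_def)
next
  fix x :: "complex^'n" assume "x \<noteq> 0 \<and> (\<forall>i. i \<notin> UNIV \<longrightarrow> x$i = 0)"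
  then have "\<epsilon> * (norm x)\<^sup>2 > 0" using \<open>\<epsilon> > 0\<close> by simp
  moreover have "qform (M + mat (of_real \<epsilon>)) x = qform M x + of_real \<epsilon> * of_real ((norm x)\<^sup>2)"
    unfolding qform_add qform_mat ..
  moreover have "Im (qform M x) = 0 \<and> Re (qform M x) \<ge> 0"
    using M unfolding pos_semidef_def psd_on_def by blast
  ultimately show "Im (qform (M + mat (of_real \<epsilon>)) x) = 0"
    and "Re (qform (M + mat (of_real \<epsilon>)) x) > 0" by simp_all
qed

lemma completable_pd_completion_exists:
  fixes B :: "complex^'n::finite^'n"
  assumes "completable E" and "partial_pd E B"
  obtains N where "N \<in> pd_completions E B"
proof -
  obtain \<epsilon> where \<epsilon>: "\<epsilon> > 0" "\<And>K x. is_clique E K \<Longrightarrow> (\<forall>i. i \<notin> K \<longrightarrow> x$i = 0) \<Longrightarrow>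
      \<epsilon> * (norm x)\<^sup>2 \<le> Re (qform B x)"
    using partial_pd_coercive[OF assms(2)] by blast
  have "partial_psd E (B - mat (of_real \<epsilon>))"
    using assms(2) \<epsilon>(2) by (rule partial_psd_diff_mat)
  then obtain M where M: "is_completion E (B - mat (of_real \<epsilon>)) M" "pos_semidef M"
    using assms(1) unfolding completable_def by blast
  have "is_completion E B (M + mat (of_real \<epsilon>))"
    using M(1) unfolding is_completion_def by auto
  with pos_def_add_mat[OF M(2) \<epsilon>(1)] show thesis
    by (intro that) (simp add: pd_completions_def)
qed

lemma pos_def_add:
  fixes M N :: "complex^'n::finite^'n"
  assumes M: "pos_def M" and N: "pos_def N"
  shows "pos_def (M + N)"
  unfolding pos_def_def pd_on_def
proof (intro conjI ballI allI impI)
  fix i j :: 'n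
  have "M$j$i = cnj (M$i$j)" "N$j$i = cnj (N$i$j)"
    using M N unfolding pos_def_def pd_on_def by blast+
  then show "(M + N)$j$i = cnj ((M + N)$i$j)" by simp
next
  fix x :: "complex^'n" assume "x \<noteq> 0 \<and> (\<forall>i. i \<notin> UNIV \<longrightarrow> x$i = 0)"
  then have "Im (qform M x) = 0 \<and> Re (qform M x) > 0" "Im (qform N x) = 0 \<and> Re (qform N x) > 0"
    using M N unfolding pos_def_def pd_on_def by blast+
  then show "Im (qform (M + N) x) = 0" and "Re (qform (M + N) x) > 0"
    unfolding qform_add by simp_all
qed

lemma is_completion_add:
  "is_completion E A M \<Longrightarrow> is_completion E B N \<Longrightarrow> is_completion E (A + B) (M + N)"
  unfolding is_completion_def by (simp add: case_prod_beta)

lemma pd_completions_add: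
  "M \<in> pd_completions E A \<Longrightarrow> N \<in> pd_completions E B \<Longrightarrow> M + N \<in> pd_completions E (A + B)"
  unfolding pd_completions_def by (simp add: is_completion_add pos_def_add)

lemma is_completion_diff:
  "is_completion E A M \<Longrightarrow> is_completion E B N \<Longrightarrow> is_completion E (A - B) (M - N)"
  unfolding is_completion_def by (simp add: case_prod_beta)

theorem theorem5p5:
  fixes E :: "('n::finite \<times> 'n) set" and A B :: "complex^'n^'n"
  assumes "is_graph E" and "completable E"
    and "partial_pd E B" and "partial_pd E (A - B)"
  shows "pd_completions E (A - B) =
    {M - N | M N. M \<in> pd_completions E A \<and> N \<in> pd_completions E B} \<inter> {M. pos_def M}"
proof
  obtain N where N: "N \<in> pd_completions E B"
    using completable_pd_completion_exists[OF assms(2,3)] .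
  show "pd_completions E (A - B) \<subseteq>
    {M - N | M N. M \<in> pd_completions E A \<and> N \<in> pd_completions E B} \<inter> {M. pos_def M}"
  proof
    fix X assume X: "X \<in> pd_completions E (A - B)"
    have "X + N \<in> pd_completions E A"
      using pd_completions_add[OF X N] by simp
    moreover have "X = (X + N) - N" by simp
    ultimately show "X \<in> {M - N | M N. M \<in> pd_completions E A \<and> N \<in> pd_completions E B}
        \<inter> {M. pos_def M}"
      using X N unfolding pd_completions_def by blast
  qed
  show "{M - N | M N. M \<in> pd_completions E A \<and> N \<in> pd_completions E B} \<inter> {M. pos_def M}
      \<subseteq> pd_completions E (A - B)"
    by (auto simp: pd_completions_def intro: is_completion_diff)
qed

end
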